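(* Let $G=(V,E)$ be a finite simple graph and let $T\geq1$ be an integer. For each zero forcing set $C$ that is the initial set of a zero forcing game in $\mathcal{Z}(G,T)$, there is a feasible solution $(s,x,y,z)$ of the Infection Model $\mathrm{IM}(G,T)$ such that $|C|=\sum_{v\in V}s_v$ and $z=\mathrm{pt}(G,C)\leq T$.
   Context: Zero forcing: $n=|V|$, $N(u)$ is the neighborhood of $u$. Under the standard color change rule, a filled vertex $u$ can force a non-filled vertex $v$ if $v$ is the only non-filled neighbor of $u$. A zero forcing game on $G$ with initial set $C\subseteq V$ consists of sets $C^{(0)}=C^{[0]}=C$, sets $C^{(t)}$ (vertices forced at time step $t$) with $C^{[t]}=C^{[t-1]}\cup C^{(t)}$ for $t\geq1$, and a collection $\phi(C)$ of forces $u\to v$, such that every vertex lies in exactly one set $C^{(t)}$, and each $v\in C^{(t)}$ with $t\geq 1$ is forced by exactly one neighbor $u$ (recorded as $u\to v$ in $\phi(C)$) such that $u$ and all neighbors of $u$ other than $v$ lie in $C^{[t-1]}$. The closure of $C$ is the set of filled vertices once no more forces are possible; $C$ is a zero forcing set if its closure is $V$. The propagation time $\mathrm{pt}(G,C)$ is the smallest $t^*$ with $C^{[t^*]}=V$ when at each time step all possible forces are applied simultaneously (i.e. $C^{(t)}$ is the set of all $v\notin C^{[t-1]}$ for which some $u\in C^{[t-1]}$ has $v$ as its unique neighbor outside $C^{[t-1]}$), and $\mathrm{pt}(G,C)=\infty$ if $C$ is not a zero forcing set. $\mathcal{Z}(G,T)$ denotes the family of all zero forcing games on $G$ whose initial set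 is a zero forcing set and which use at most $T$ time steps. Infection Model: let $A$ be the set of arcs containing both $(u,v)$ and $(v,u)$ for each edge $\{u,v\}\in E$. The model $\mathrm{IM}(G,T)$ has variables $s_v\in\{0,1\}$ and $x_v\in\{0,1,\dots,T\}$ for $v\in V$, $y_a\in\{0,1\}$ for $a\in A$, and $z\in\{0,1,\dots,T\}$, subject to: (i) $s_v+\sum_{a=(u,v)\in A}y_a=1$ for all $v\in V$; (ii) $x_u-x_v+(T+1)y_a\leq T$ for all $a=(u,v)\in A$; (iii) $x_w-x_v+(T+1)y_a\leq T$ for all $a=(u,v)\in A$ and $w\in N(u)\setminus\{v\}$; (iv) $x_v-z\leq 0$ for all $v\in V$. A feasible solution is one satisfying all these constraints. *)

theory Defs
  imports Main "HOL-Library.Extended_Nat"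
begin

definition simple_graph :: "'a set \<Rightarrow> ('a \<Rightarrow> 'a \<Rightarrow> bool) \<Rightarrow> bool" where
  "simple_graph V E \<longleftrightarrow> finite V \<and> (\<forall>u v. E u v \<longrightarrow> u \<in> V \<and> v \<in> V)
     \<and> (\<forall>u v. E u v \<longrightarrow> E v u) \<and> (\<forall>u. \<not> E u u)"

definition nbhd :: "'a set \<Rightarrow> ('a \<Rightarrow> 'a \<Rightarrow> bool) \<Rightarrow> 'a \<Rightarrow> 'a set" where
  "nbhd V E u = {w \<in> V. E u w}"

definition force_step :: "'a set \<Rightarrow> ('a \<Rightarrow> 'a \<Rightarrow> bool) \<Rightarrow> 'a set \<Rightarrow> 'a set" where
  "force_step V E S = S \<union> {v \<in> V - S. \<exists>u \<in> S. E u v \<and> nbhd V E u - S = {v}}"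

definition zf_closure :: "'a set \<Rightarrow> ('a \<Rightarrow> 'a \<Rightarrow> bool) \<Rightarrow> 'a set \<Rightarrow> 'a set" where
  "zf_closure V E C = (\<Union>t. (force_step V E ^^ t) C)"

definition zero_forcing_set :: "'a set \<Rightarrow> ('a \<Rightarrow> 'a \<Rightarrow> bool) \<Rightarrow> 'a set \<Rightarrow> bool" where
  "zero_forcing_set V E C \<longleftrightarrow> C \<subseteq> V \<and> zf_closure V E C = V"

definition pt :: "'a set \<Rightarrow> ('a \<Rightarrow> 'a \<Rightarrow> bool) \<Rightarrow> 'a set \<Rightarrow> enat" where
  "pt V E C = (if zero_forcing_set V E C
      then enat (LEAST t. (force_step V E ^^ t) C = V) else \<infinity>)"

text \<open>A zero forcing game with initial set C: Cs t is the set C^(t) of vertices forced at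
  time t, and phi is the set of forces (u,v) meaning u \<rightarrow> v.\<close>
definition filled_upto :: "(nat \<Rightarrow> 'a set) \<Rightarrow> nat \<Rightarrow> 'a set" where
  "filled_upto Cs t = (\<Union>i\<le>t. Cs i)"

definition zf_game :: "'a set \<Rightarrow> ('a \<Rightarrow> 'a \<Rightarrow> bool) \<Rightarrow> 'a set \<Rightarrow> (nat \<Rightarrow> 'a set)
    \<Rightarrow> ('a \<times> 'a) set \<Rightarrow> bool" where
  "zf_game V E C Cs phi \<longleftrightarrow>
     Cs 0 = C \<and> (\<forall>t. Cs t \<subseteq> V)
     \<and> (\<forall>v \<in> V. \<exists>!t. v \<in> Cs t)
     \<and> (\<forall>u v. (u, v) \<in> phi \<longrightarrow> (\<exists>t\<ge>1. v \<in> Cs t))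
     \<and> (\<forall>t\<ge>1. \<forall>v \<in> Cs t. (\<exists>!u. (u, v) \<in> phi) \<and>
          (\<forall>u. (u, v) \<in> phi \<longrightarrow> E u v \<and> u \<in> filled_upto Cs (t - 1)
               \<and> nbhd V E u - {v} \<subseteq> filled_upto Cs (t - 1)))"

definition in_Z :: "'a set \<Rightarrow> ('a \<Rightarrow> 'a \<Rightarrow> bool) \<Rightarrow> nat \<Rightarrow> 'a set \<Rightarrow> (nat \<Rightarrow> 'a set)
    \<Rightarrow> ('a \<times> 'a) set \<Rightarrow> bool" where
  "in_Z V E T C Cs phi \<longleftrightarrow> zf_game V E C Cs phi \<and> zero_forcing_set V E C
     \<and> filled_upto Cs T = V"

definition arcs :: "'a set \<Rightarrow> ('a \<Rightarrow> 'a \<Rightarrow> bool) \<Rightarrow> ('a \<times> 'a) set" where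
  "arcs V E = {(u, v). u \<in> V \<and> v \<in> V \<and> E u v}"

definition IM_feasible :: "'a set \<Rightarrow> ('a \<Rightarrow> 'a \<Rightarrow> bool) \<Rightarrow> nat \<Rightarrow> ('a \<Rightarrow> int) \<Rightarrow> ('a \<Rightarrow> int)
    \<Rightarrow> ('a \<times> 'a \<Rightarrow> int) \<Rightarrow> int \<Rightarrow> bool" where
  "IM_feasible V E T s x y z \<longleftrightarrow>
     (\<forall>v \<in> V. s v \<in> {0, 1} \<and> x v \<in> {0..int T})
     \<and> (\<forall>a \<in> arcs V E. y a \<in> {0, 1}) \<and> z \<in> {0..int T}
     \<and> (\<forall>v \<in> V. s v + (\<Sum>a \<in> {a \<in> arcs V E. snd a = v}. y a) = 1)
     \<and> (\<forall>(u, v) \<in> arcs V E. x u - x v + (int T + 1) * y (u, v) \<le> int T)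
     \<and> (\<forall>(u, v) \<in> arcs V E. \<forall>w \<in> nbhd V E u - {v}.
           x w - x v + (int T + 1) * y (u, v) \<le> int T)
     \<and> (\<forall>v \<in> V. x v - z \<le> 0)"

end

theory Submission
  imports Defs
begin

text \<open>Every move of a zero forcing game is also available to simultaneous forcing, so after
  t steps the game has filled no more than t rounds of simultaneous forcing; in particular
  simultaneous forcing fills V within T rounds. Take x v to be the round in which v gets
  filled under simultaneous forcing and let every vertex outside C choose one vertex that
  forces it in that round: the forcer and all its other neighbours were filled strictly
  earlier, which is exactly what the big-M constraints of the Infection Model ask for the
  chosen arcs, while for all other arcs they hold because every time lies in 0..T.\<close>

lemma force_step_increasing: "S \<subseteq> force_step V E S"
  by (auto simp: force_step_def)

lemma force_iter_subset:
  assumes "C \<subseteq> V"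
  shows "(force_step V E ^^ t) C \<subseteq> V"
  using assms by (induction t) (auto simp: force_step_def)

lemma filled_upto_Suc: "filled_upto Cs (Suc t) = filled_upto Cs t \<union> Cs (Suc t)"
  by (auto simp: filled_upto_def le_Suc_eq)

lemma zf_game_forcer:
  assumes "zf_game V E C Cs phi" and "t \<ge> 1" and "v \<in> Cs t"
  shows "\<exists>u. E u v \<and> u \<in> filled_upto Cs (t - 1) \<and> nbhd V E u - {v} \<subseteq> filled_upto Cs (t - 1)"
  using assms unfolding zf_game_def by metis

lemma zf_game_filled_upto_subset_force_iter:
  assumes game: "zf_game V E C Cs phi"
  shows "filled_upto Cs t \<subseteq> (force_step V E ^^ t) C"
proof (induction t)
  case 0
  have "Cs 0 = C" using game by (simp add: zf_game_def)
  then show ?case by (simp add: filled_upto_def)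
next
  case (Suc t)
  let ?S = "(force_step V E ^^ t) C"
  have "v \<in> force_step V E ?S" if v: "v \<in> Cs (Suc t)" for v
  proof (cases "v \<in> ?S")
    case True
    then show ?thesis by (rule subsetD[OF force_step_increasing])
  next
    case False
    obtain u where u: "E u v" "u \<in> filled_upto Cs t" "nbhd V E u - {v} \<subseteq> filled_upto Cs t"
      using zf_game_forcer[OF game _ v] by auto
    have "v \<in> V" using game v unfolding zf_game_def by blast
    with u(1) have "v \<in> nbhd V E u" by (simp add: nbhd_def)
    then have "nbhd V E u - ?S = {v}" using u(3) Suc.IH False by blast
    moreover have "u \<in> ?S" using u(2) Suc.IH by blast
    ultimately show ?thesis using u(1) \<open>v \<in> V\<close> False unfolding force_step_def by blast
  qed
  then have "Cs (Suc t) \<subseteq> force_step V E ?S" by blast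
  moreover have "filled_upto Cs t \<subseteq> force_step V E ?S"
    using Suc.IH force_step_increasing by (rule order_trans)
  ultimately show ?case by (simp add: filled_upto_Suc)
qed

lemma in_Z_force_iter_eq:
  assumes "in_Z V E T C Cs phi"
  shows "(force_step V E ^^ T) C = V"
proof -
  have "zf_game V E C Cs phi" "filled_upto Cs T = V" "C \<subseteq> V"
    using assms by (auto simp: in_Z_def zero_forcing_set_def)
  then show ?thesis
    using zf_game_filled_upto_subset_force_iter force_iter_subset by blast
qed

definition infection_time :: "'a set \<Rightarrow> ('a \<Rightarrow> 'a \<Rightarrow> bool) \<Rightarrow> 'a set \<Rightarrow> 'a \<Rightarrow> nat" where
  "infection_time V E C v = (LEAST t. v \<in> (force_step V E ^^ t) C)"

lemma infection_time_le:
  "v \<in> (force_step V E ^^ t) C \<Longrightarrow> infection_time V E C v \<le> t"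
  unfolding infection_time_def by (rule Least_le)

lemma mem_force_iter_infection_time:
  "v \<in> (force_step V E ^^ t) C \<Longrightarrow> v \<in> (force_step V E ^^ infection_time V E C v) C"
  unfolding infection_time_def by (rule LeastI)

lemma exists_forcer_infected_earlier:
  assumes "C \<subseteq> V" and v: "v \<in> (force_step V E ^^ t) C" "v \<notin> C"
  shows "\<exists>u. (u, v) \<in> arcs V E \<and> infection_time V E C u < infection_time V E C v
           \<and> (\<forall>w \<in> nbhd V E u - {v}. infection_time V E C w < infection_time V E C v)"
proof -
  let ?S = "\<lambda>t. (force_step V E ^^ t) C"
  obtain j where j: "infection_time V E C v = Suc j"
    using mem_force_iter_infection_time[OF v(1)] v(2) by (cases "infection_time V E C v") auto
  have "v \<notin> ?S j" using infection_time_le[of v j V E C] j by auto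
  moreover have "v \<in> force_step V E (?S j)" using mem_force_iter_infection_time[OF v(1)] j by simp
  ultimately obtain u where u: "u \<in> ?S j" "E u v" "nbhd V E u - ?S j = {v}" "v \<in> V"
    unfolding force_step_def by blast
  have "u \<in> V" using u(1) force_iter_subset[OF assms(1)] by blast
  moreover have "infection_time V E C w < infection_time V E C v" if "w \<in> ?S j" for w
    using infection_time_le[OF that] j by simp
  ultimately show ?thesis using u by (auto simp: arcs_def)
qed

lemma IM_feasible_of_forcing_times:
  fixes tm :: "'a \<Rightarrow> nat" and f :: "'a \<Rightarrow> 'a"
  assumes "finite V" and "p \<le> T" and tm_le: "\<And>v. v \<in> V \<Longrightarrow> tm v \<le> p"
    and forcer: "\<And>v. v \<in> V - C \<Longrightarrow> (f v, v) \<in> arcs V E \<and> tm (f v) < tm v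
                  \<and> (\<forall>w \<in> nbhd V E (f v) - {v}. tm w < tm v)"
  shows "IM_feasible V E T (\<lambda>v. of_bool (v \<in> C)) (\<lambda>v. int (tm v))
           (\<lambda>(u, v). of_bool (v \<notin> C \<and> u = f v)) (int p)"
proof -
  define y :: "'a \<times> 'a \<Rightarrow> int" where "y = (\<lambda>(u, v). of_bool (v \<notin> C \<and> u = f v))"
  have "finite (arcs V E)"
    by (rule finite_subset[of _ "V \<times> V"]) (auto simp: arcs_def \<open>finite V\<close>)
  have in_arcs: "u \<in> V" "v \<in> V" if "(u, v) \<in> arcs V E" for u v
    using that by (auto simp: arcs_def)
  have one_parent: "of_bool (v \<in> C) + (\<Sum>a \<in> {a \<in> arcs V E. snd a = v}. y a) = 1"
    if "v \<in> V" for v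
  proof (cases "v \<in> C")
    case False
    have "{a \<in> arcs V E. snd a = v} \<inter> {a. fst a = f v} = {(f v, v)}"
      using forcer[of v] that False by auto
    then show ?thesis using \<open>finite (arcs V E)\<close> False by (simp add: y_def case_prod_beta)
  next
    case True
    then show ?thesis by (simp add: y_def case_prod_beta)
  qed
  have big_M: "int (tm w) - int (tm v) + (int T + 1) * y (u, v) \<le> int T"
    if uv: "(u, v) \<in> arcs V E" and w: "w = u \<or> w \<in> nbhd V E u - {v}" for u v w
  proof (cases "v \<notin> C \<and> u = f v")
    case True
    then have "tm w < tm v" using forcer[of v] in_arcs[OF uv] w by auto
    then show ?thesis using True by (simp add: y_def)
  next
    case False
    have "w \<in> V" using w in_arcs[OF uv] by (auto simp: nbhd_def)
    then show ?thesis
      using False tm_le[of w] tm_le[OF in_arcs(2)[OF uv]] \<open>p \<le> T\<close> by (auto simp: y_def)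
  qed
  show ?thesis
    unfolding IM_feasible_def y_def[symmetric]
  proof (intro conjI)
    show "\<forall>v\<in>V. of_bool (v \<in> C) \<in> {0, 1::int} \<and> int (tm v) \<in> {0..int T}"
      using tm_le \<open>p \<le> T\<close> by fastforce
    show "\<forall>a\<in>arcs V E. y a \<in> {0, 1}"
      by (simp add: y_def case_prod_beta)
    show "int p \<in> {0..int T}"
      using \<open>p \<le> T\<close> by simp
    show "\<forall>v\<in>V. of_bool (v \<in> C) + (\<Sum>a \<in> {a \<in> arcs V E. snd a = v}. y a) = 1"
      using one_parent by blast
    show "\<forall>(u, v)\<in>arcs V E. int (tm u) - int (tm v) + (int T + 1) * y (u, v) \<le> int T"
      using big_M by blast
    show "\<forall>(u, v)\<in>arcs V E. \<forall>w\<in>nbhd V E u - {v}.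
            int (tm w) - int (tm v) + (int T + 1) * y (u, v) \<le> int T"
      using big_M by blast
    show "\<forall>v\<in>V. int (tm v) - int p \<le> 0"
      using tm_le by simp
  qed
qed

theorem theorem3p2:
  fixes V :: "'a set" and E :: "'a \<Rightarrow> 'a \<Rightarrow> bool" and T :: nat
    and C :: "'a set" and Cs :: "nat \<Rightarrow> 'a set" and phi :: "('a \<times> 'a) set"
  assumes "simple_graph V E"
    and "T \<ge> 1"
    and "in_Z V E T C Cs phi"
  shows "\<exists>s x y z. IM_feasible V E T s x y z \<and> int (card C) = (\<Sum>v\<in>V. s v)
           \<and> pt V E C = enat (nat z) \<and> pt V E C \<le> enat T"
proof -
  have "finite V" using assms(1) by (simp add: simple_graph_def)
  have zfs: "zero_forcing_set V E C" using assms(3) by (simp add: in_Z_def)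
  then have "C \<subseteq> V" by (simp add: zero_forcing_set_def)
  define p where "p = (LEAST t. (force_step V E ^^ t) C = V)"
  have filled_T: "(force_step V E ^^ T) C = V" using in_Z_force_iter_eq[OF assms(3)] .
  then have "p \<le> T" unfolding p_def by (rule Least_le)
  have filled_p: "(force_step V E ^^ p) C = V" using filled_T unfolding p_def by (rule LeastI)
  have pt: "pt V E C = enat p" using zfs by (simp add: pt_def p_def)
  let ?tm = "infection_time V E C"
  have "\<forall>v \<in> V - C. \<exists>u. (u, v) \<in> arcs V E \<and> ?tm u < ?tm v \<and> (\<forall>w \<in> nbhd V E u - {v}. ?tm w < ?tm v)"
    using exists_forcer_infected_earlier[OF \<open>C \<subseteq> V\<close>] filled_p by blast
  from bchoice[OF this] obtain f where f: "\<forall>v \<in> V - C. (f v, v) \<in> arcs V E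
      \<and> ?tm (f v) < ?tm v \<and> (\<forall>w \<in> nbhd V E (f v) - {v}. ?tm w < ?tm v)" ..
  have tm_le: "?tm v \<le> p" if "v \<in> V" for v
    using infection_time_le[of v p V E C] filled_p that by simp
  have "IM_feasible V E T (\<lambda>v. of_bool (v \<in> C)) (\<lambda>v. int (?tm v))
          (\<lambda>(u, v). of_bool (v \<notin> C \<and> u = f v)) (int p)"
    by (rule IM_feasible_of_forcing_times[OF \<open>finite V\<close> \<open>p \<le> T\<close> tm_le f[rule_format]])
  moreover have "int (card C) = (\<Sum>v\<in>V. of_bool (v \<in> C))"
    using \<open>finite V\<close> \<open>C \<subseteq> V\<close> by (simp add: Int_absorb1 Int_def[symmetric])
  ultimately show ?thesis
    using pt \<open>p \<le> T\<close> by (intro exI[of _ "\<lambda>v. of_bool (v \<in> C)"] exI conjI) auto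
qed

end
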